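(* For $n\ge i+1\ge2$, \[ D_{n,i}=z^{i-1}\tau_iD_{n-i}-z^{i+2}\tau_{i-1}D_{n-i-1}, \] where the polynomials $\tau_i=\tau_i(z)$ are defined by $\sum_{i\ge0}\tau_iw^i=\dfrac{w}{1-2w+w^2-z^3w^3}$.
   Context: For $h\ge1$, $D_h=D_h(z)$ is the determinant of the $h\times h$ matrix $T_h$ (rows/columns indexed $0,\dots,h-1$) with entries $(T_h)_{p,p}=1$, $(T_h)_{p,p+1}=-2z$, $(T_h)_{p,p+2}=z^2$, $(T_h)_{p+1,p}=-z^2$, and all other entries $0$; $D_0=1$. Let $M_n=T_n^{\mathsf T}$ (the transpose, so $\det M_n=D_n$). For $1\le i\le n$, $D_{n,i}$ denotes the determinant of the matrix obtained from $M_n$ by replacing its $i$-th column (columns numbered $1,\dots,n$) by the vector $(1,0,\dots,0)^{\mathsf T}$. *)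

theory Defs
  imports "Jordan_Normal_Form.Determinant" "HOL-Computational_Algebra.Formal_Power_Series"
begin

definition T_mat :: "nat \<Rightarrow> 'a::field \<Rightarrow> 'a mat" where
  "T_mat h z = mat h h (\<lambda>(p, q).
     if q = p then 1
     else if q = p + 1 then - 2 * z
     else if q = p + 2 then z ^ 2
     else if p = q + 1 then - (z ^ 2)
     else 0)"

definition D :: "nat \<Rightarrow> 'a::field \<Rightarrow> 'a" where
  "D h z = (if h = 0 then 1 else det (T_mat h z))"

definition M_mat :: "nat \<Rightarrow> 'a::field \<Rightarrow> 'a mat" where
  "M_mat n z = transpose_mat (T_mat n z)"

text \<open>D_{n,i}: determinant of M_n with its i-th column (columns numbered 1..n)
  replaced by (1,0,...,0)^T.\<close>
definition Dni :: "nat \<Rightarrow> nat \<Rightarrow> 'a::field \<Rightarrow> 'a" where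
  "Dni n i z = det (mat n n (\<lambda>(p, q).
      if q = i - 1 then (if p = 0 then 1 else 0) else M_mat n z $$ (p, q)))"

definition tau_fps :: "'a::field \<Rightarrow> 'a fps" where
  "tau_fps z = fps_X * inverse (1 - 2 * fps_X + fps_X ^ 2 - fps_const (z ^ 3) * fps_X ^ 3)"

definition tau :: "'a::field \<Rightarrow> nat \<Rightarrow> 'a" where
  "tau z i = fps_nth (tau_fps z) i"

end

theory Submission
  imports Defs
begin

text \<open>Expanding D_{n,i} along its i-th column, a unit vector, leaves the minor of M_n without
  row 0 and column i. This minor consists of two diagonal blocks coupled by just two entries:
  rows 1..i-1 and columns 0..i-2 of M, whose determinant is (-z)^(i-1) \<tau>_i because both sides
  satisfy the same third-order recurrence, and a copy of M_{n-i}. Expanding along the last row,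
  the minor satisfies in n the recurrence D_{h+3} = D_{h+2} - 2z^3 D_{h+1} + z^6 D_h of D itself,
  so comparing three initial values gives the formula.\<close>

definition square_mat :: "nat \<Rightarrow> (nat \<Rightarrow> nat \<Rightarrow> 'a) \<Rightarrow> 'a mat" where
  "square_mat n f = mat n n (\<lambda>(r, c). f r c)"

lemma square_mat_carrier [simp]: "square_mat n f \<in> carrier_mat n n"
  by (simp add: square_mat_def)

lemma square_mat_cong:
  "(\<And>r c. r < n \<Longrightarrow> c < n \<Longrightarrow> f r c = g r c) \<Longrightarrow> square_mat n f = square_mat n g"
  unfolding square_mat_def by (rule eq_matI) auto

lemma det_square_mat_0 [simp]: "det (square_mat 0 f) = 1"
  by (rule det_dim_zero) simp

lemma det_square_mat_transpose:
  "det (square_mat n (\<lambda>r c. f c r) :: 'a::comm_ring_1 mat) = det (square_mat n f)"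
proof -
  have "square_mat n (\<lambda>r c. f c r) = transpose_mat (square_mat n f)"
    unfolding square_mat_def by (rule eq_matI) auto
  then show ?thesis by (simp add: det_transpose[OF square_mat_carrier])
qed

lemma det_square_mat_last_row_expansion:
  "det (square_mat (Suc s) f :: 'a::comm_ring_1 mat) =
     (\<Sum>j<Suc s. (-1)^(s+j) * f s j * det (square_mat s (\<lambda>r c. f r (if c < j then c else Suc c))))"
proof -
  have "det (square_mat (Suc s) f) =
      (\<Sum>j<Suc s. square_mat (Suc s) f $$ (s,j) * cofactor (square_mat (Suc s) f) s j)"
    by (rule laplace_expansion_row[OF square_mat_carrier]) simp
  also have "\<dots> = (\<Sum>j<Suc s. (-1)^(s+j) * f s j *
      det (square_mat s (\<lambda>r c. f r (if c < j then c else Suc c))))"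
  proof (rule sum.cong[OF refl])
    fix j assume j: "j \<in> {..<Suc s}"
    have "mat_delete (square_mat (Suc s) f) s j =
        square_mat s (\<lambda>r c. f r (if c < j then c else Suc c))"
      unfolding mat_delete_def square_mat_def by (rule eq_matI) auto
    with j show "square_mat (Suc s) f $$ (s,j) * cofactor (square_mat (Suc s) f) s j =
        (-1)^(s+j) * f s j * det (square_mat s (\<lambda>r c. f r (if c < j then c else Suc c)))"
      unfolding cofactor_def by (simp add: square_mat_def)
  qed
  finally show ?thesis .
qed

lemma det_square_mat_last_row_diag:
  assumes "\<And>c. c < s \<Longrightarrow> f s c = 0"
  shows "det (square_mat (Suc s) f :: 'a::comm_ring_1 mat) = f s s * det (square_mat s f)"
proof -
  let ?del = "\<lambda>j r c. f r (if c < j then c else Suc c)"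
  have "square_mat s (?del s) = square_mat s f"
    by (rule square_mat_cong) simp
  moreover have "(\<Sum>j<s. (-1)^(s + j) * f s j * det (square_mat s (?del j))) = 0"
    by (rule sum.neutral) (simp add: assms)
  ultimately show ?thesis
    unfolding det_square_mat_last_row_expansion[of s] by simp
qed

lemma det_square_mat_last_col_diag:
  assumes "\<And>r. r < s \<Longrightarrow> f r s = 0"
  shows "det (square_mat (Suc s) f :: 'a::comm_ring_1 mat) = f s s * det (square_mat s f)"
proof -
  have "det (square_mat (Suc s) f) = det (square_mat (Suc s) (\<lambda>r c. f c r))"
    by (rule det_square_mat_transpose[symmetric])
  also have "\<dots> = f s s * det (square_mat s (\<lambda>r c. f c r))"
    by (rule det_square_mat_last_row_diag) (simp add: assms)
  also have "det (square_mat s (\<lambda>r c. f c r)) = det (square_mat s f)"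
    by (rule det_square_mat_transpose)
  finally show ?thesis .
qed

lemma det_square_mat_two_term:
  assumes "\<And>c. c < s \<Longrightarrow> f (Suc s) c = 0" and "\<And>r. r < s \<Longrightarrow> f r (Suc s) = 0"
  shows "det (square_mat (Suc (Suc s)) f :: 'a::comm_ring_1 mat) =
    f (Suc s) (Suc s) * det (square_mat (Suc s) f)
    - f (Suc s) s * f s (Suc s) * det (square_mat s f)"
proof -
  let ?del = "\<lambda>j r c. f r (if c < j then c else Suc c)"
  have "square_mat (Suc s) (?del (Suc s)) = square_mat (Suc s) f"
    by (rule square_mat_cong) simp
  moreover have "det (square_mat (Suc s) (?del s)) = f s (Suc s) * det (square_mat s f)"
  proof -
    have "square_mat s (?del s) = square_mat s f" by (rule square_mat_cong) simp
    then show ?thesis by (simp add: det_square_mat_last_col_diag assms(2))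
  qed
  moreover have "(\<Sum>j<s. (-1)^(Suc s + j) * f (Suc s) j * det (square_mat (Suc s) (?del j))) = 0"
    by (rule sum.neutral) (simp add: assms(1))
  ultimately show ?thesis
    by (simp add: det_square_mat_last_row_expansion[of "Suc s"])
qed

lemma det_square_mat_three_term:
  assumes "\<And>c. c < s \<Longrightarrow> f (Suc (Suc s)) c = 0" and "\<And>r. r \<le> s \<Longrightarrow> f r (Suc (Suc s)) = 0"
    and "\<And>r. r < s \<Longrightarrow> f r (Suc s) = 0"
  shows "det (square_mat (Suc (Suc (Suc s))) f :: 'a::comm_ring_1 mat) =
    f (Suc (Suc s)) (Suc (Suc s)) * det (square_mat (Suc (Suc s)) f)
    - f (Suc (Suc s)) (Suc s) * f (Suc s) (Suc (Suc s)) * det (square_mat (Suc s) f)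
    + f (Suc (Suc s)) s * f (Suc s) (Suc (Suc s)) * f s (Suc s) * det (square_mat s f)"
proof -
  let ?del = "\<lambda>j r c. f r (if c < j then c else Suc c)"
  have "square_mat (Suc (Suc s)) (?del (Suc (Suc s))) = square_mat (Suc (Suc s)) f"
    by (rule square_mat_cong) simp
  moreover have "det (square_mat (Suc (Suc s)) (?del (Suc s))) =
      f (Suc s) (Suc (Suc s)) * det (square_mat (Suc s) f)"
  proof -
    have "square_mat (Suc s) (?del (Suc s)) = square_mat (Suc s) f" by (rule square_mat_cong) simp
    then show ?thesis by (simp add: det_square_mat_last_col_diag assms(2))
  qed
  moreover have "det (square_mat (Suc (Suc s)) (?del s)) =
      f (Suc s) (Suc (Suc s)) * f s (Suc s) * det (square_mat s f)"
  proof -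
    have "square_mat s (?del s) = square_mat s f" by (rule square_mat_cong) simp
    then show ?thesis by (simp add: det_square_mat_last_col_diag assms(2,3))
  qed
  moreover have "(\<Sum>j<s. (-1)^(Suc (Suc s) + j) * f (Suc (Suc s)) j *
      det (square_mat (Suc (Suc s)) (?del j))) = 0"
    by (rule sum.neutral) (simp add: assms(1))
  ultimately show ?thesis
    by (simp add: det_square_mat_last_row_expansion[of "Suc (Suc s)"])
qed

lemma det_square_mat_unit_col:
  assumes "k \<le> n" and "\<And>r. f r k = (if r = 0 then 1 else 0)"
  shows "det (square_mat (Suc n) f :: 'a::comm_ring_1 mat) =
    (-1)^k * det (square_mat n (\<lambda>r c. f (Suc r) (if c < k then c else Suc c)))"
proof -
  let ?A = "square_mat (Suc n) f"
  have "det ?A = (\<Sum>r<Suc n. ?A $$ (r, k) * cofactor ?A r k)"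
    by (rule laplace_expansion_column[OF square_mat_carrier]) (use assms(1) in simp)
  also have "\<dots> = ?A $$ (0, k) * cofactor ?A 0 k + (\<Sum>r<n. ?A $$ (Suc r, k) * cofactor ?A (Suc r) k)"
    by (rule sum.lessThan_Suc_shift)
  also have "(\<Sum>r<n. ?A $$ (Suc r, k) * cofactor ?A (Suc r) k) = 0"
    by (rule sum.neutral) (use assms in \<open>simp add: square_mat_def\<close>)
  also have "mat_delete ?A 0 k = square_mat n (\<lambda>r c. f (Suc r) (if c < k then c else Suc c))"
    unfolding mat_delete_def square_mat_def by (rule eq_matI) auto
  then have "cofactor ?A 0 k = (-1)^k * det (square_mat n (\<lambda>r c. f (Suc r) (if c < k then c else Suc c)))"
    by (simp add: cofactor_def)
  finally show ?thesis using assms by (simp add: square_mat_def)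
qed

lemma linear_recurrence3_unique:
  fixes u v :: "nat \<Rightarrow> 'a::semiring_0"
  assumes "\<And>m. u (Suc (Suc (Suc m))) = a * u (Suc (Suc m)) + b * u (Suc m) + c * u m"
    and "\<And>m. v (Suc (Suc (Suc m))) = a * v (Suc (Suc m)) + b * v (Suc m) + c * v m"
    and "u 0 = v 0" "u 1 = v 1" "u 2 = v 2"
  shows "u m = v m"
proof (induction m rule: less_induct)
  case (less m)
  consider "m = 0" | "m = 1" | "m = 2" | t where "m = Suc (Suc (Suc t))"
    by (metis One_nat_def Suc_1 not0_implies_Suc)
  then show ?case
  proof cases
    case (4 t)
    then show ?thesis using assms(1,2) less by simp
  qed (use assms(3-5) in simp_all)
qed

lemma tau_coeff_equation:
  fixes z :: "'a::field"
  shows "fps_nth (tau_fps z - fps_const 2 * (tau_fps z * fps_X^1) + tau_fps z * fps_X^2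
      - fps_const (z^3) * (tau_fps z * fps_X^3)) n = fps_nth fps_X n"
proof -
  define Q :: "'a fps" where "Q = 1 - 2 * fps_X + fps_X ^ 2 - fps_const (z ^ 3) * fps_X ^ 3"
  have "fps_nth Q 0 \<noteq> 0" unfolding Q_def by simp
  then have "tau_fps z * Q = fps_X"
    unfolding tau_fps_def Q_def[symmetric] by (simp add: mult.assoc inverse_mult_eq_1)
  moreover have "tau_fps z * Q = tau_fps z - fps_const 2 * (tau_fps z * fps_X^1)
      + tau_fps z * fps_X^2 - fps_const (z^3) * (tau_fps z * fps_X^3)"
    unfolding Q_def by (simp add: algebra_simps numeral_fps_const)
  ultimately show ?thesis by metis
qed

lemma tau_initial: "tau z 0 = 0" "tau z (Suc 0) = 1" "tau z 2 = 2" "tau z 3 = 3"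
  using tau_coeff_equation[of z 0] tau_coeff_equation[of z 1] tau_coeff_equation[of z 2]
    tau_coeff_equation[of z 3]
  unfolding tau_def by (simp_all add: fps_X_power_mult_right_nth)

lemma tau_recurrence:
  "tau z (Suc (Suc (Suc m))) = 2 * tau z (Suc (Suc m)) - tau z (Suc m) + z^3 * tau z m"
  using tau_coeff_equation[of z "Suc (Suc (Suc m))"] unfolding tau_def
  by (simp add: fps_X_power_mult_right_nth) (simp add: algebra_simps)

text \<open>Every M_n is the leading n \<times> n block of the infinite band matrix with these entries.\<close>

definition M_entry :: "'a::field \<Rightarrow> nat \<Rightarrow> nat \<Rightarrow> 'a" where
  "M_entry z p q = (if p = q then 1 else if p = q + 1 then - 2 * z else if p = q + 2 then z ^ 2
     else if q = p + 1 then - (z ^ 2) else 0)"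

lemma D_eq_det_M: "D h z = det (square_mat h (M_entry z))"
proof (cases "h = 0")
  case False
  have "det (T_mat h z) = det (transpose_mat (T_mat h z))"
    by (rule det_transpose[of _ h, symmetric]) (simp add: T_mat_def)
  also have "transpose_mat (T_mat h z) = square_mat h (M_entry z)"
    unfolding square_mat_def T_mat_def by (rule eq_matI) (auto simp: M_entry_def)
  finally show ?thesis using False by (simp add: D_def)
qed (simp add: D_def)

lemma D_initial: "D 0 z = 1" "D (Suc 0) z = 1" "D 2 z = 1 - 2 * z^3"
proof -
  show "D 0 z = 1" by (simp add: D_def)
  have "det (square_mat (Suc 0) (M_entry z)) = 1"
    by (subst det_square_mat_last_row_diag) (simp_all add: M_entry_def)
  then show "D (Suc 0) z = 1" by (simp add: D_eq_det_M)
  have "det (square_mat (Suc (Suc 0)) (M_entry z)) = 1 - 2 * z^3"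
    by (subst det_square_mat_two_term) (simp_all add: M_entry_def det_square_mat_last_row_diag eval_nat_numeral)
  then show "D 2 z = 1 - 2 * z^3" by (simp add: D_eq_det_M numeral_2_eq_2)
qed

lemma D_recurrence:
  "D (Suc (Suc (Suc s))) z = D (Suc (Suc s)) z - 2 * z^3 * D (Suc s) z + z^6 * D s z"
  unfolding D_eq_det_M
  by (subst det_square_mat_three_term) (auto simp: M_entry_def eval_nat_numeral)

definition D_prev :: "'a::field \<Rightarrow> nat \<Rightarrow> 'a" where
  "D_prev z m = (if m = 0 then 0 else D (m - 1) z)"

lemma D_prev_recurrence:
  "D_prev z (Suc (Suc (Suc m))) = D_prev z (Suc (Suc m)) - 2 * z^3 * D_prev z (Suc m) + z^6 * D_prev z m"
proof (cases m)
  case 0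
  then show ?thesis using D_initial[of z] by (simp add: D_prev_def numeral_2_eq_2)
qed (simp add: D_prev_def D_recurrence)

definition sub_det :: "'a::field \<Rightarrow> nat \<Rightarrow> 'a" where
  "sub_det z s = det (square_mat s (\<lambda>r c. M_entry z (Suc r) c))"

text \<open>Transposed, the band has the shape required by \<open>det_square_mat_three_term\<close>.\<close>

lemma sub_det_transpose: "sub_det z s = det (square_mat s (\<lambda>r c. M_entry z (Suc c) r))"
  unfolding sub_det_def by (rule det_square_mat_transpose[symmetric])

lemma sub_det_initial: "sub_det z 0 = 1" "sub_det z (Suc 0) = - 2 * z" "sub_det z 2 = 3 * z^2"
proof -
  show "sub_det z 0 = 1" by (simp add: sub_det_def)
  have "det (square_mat (Suc 0) (\<lambda>r c. M_entry z (Suc r) c)) = - 2 * z"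
    by (subst det_square_mat_last_row_diag) (simp_all add: M_entry_def)
  then show "sub_det z (Suc 0) = - 2 * z" by (simp add: sub_det_def)
  have "det (square_mat (Suc (Suc 0)) (\<lambda>r c. M_entry z (Suc r) c)) = 3 * z^2"
    by (subst det_square_mat_two_term)
      (simp_all add: M_entry_def det_square_mat_last_row_diag eval_nat_numeral)
  then show "sub_det z 2 = 3 * z^2" by (simp add: sub_det_def numeral_2_eq_2)
qed

lemma sub_det_recurrence:
  "sub_det z (Suc (Suc (Suc s))) = - 2 * z * sub_det z (Suc (Suc s)) - z^2 * sub_det z (Suc s) - z^6 * sub_det z s"
  unfolding sub_det_transpose
  by (subst det_square_mat_three_term) (auto simp: M_entry_def eval_nat_numeral)

lemma sub_det_eq_tau: "sub_det z m = (- z)^m * tau z (Suc m)"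
proof (rule linear_recurrence3_unique[where u = "sub_det z" and v = "\<lambda>m. (- z)^m * tau z (Suc m)"])
  show "sub_det z (Suc (Suc (Suc m))) =
      - 2 * z * sub_det z (Suc (Suc m)) + (- (z^2)) * sub_det z (Suc m) + (- (z^6)) * sub_det z m" for m
    by (simp add: sub_det_recurrence)
  show "(- z)^(Suc (Suc (Suc m))) * tau z (Suc (Suc (Suc (Suc m)))) =
      - 2 * z * ((- z)^(Suc (Suc m)) * tau z (Suc (Suc (Suc m))))
      + (- (z^2)) * ((- z)^(Suc m) * tau z (Suc (Suc m))) + (- (z^6)) * ((- z)^m * tau z (Suc m))" for m
    by (simp add: tau_recurrence algebra_simps eval_nat_numeral)
qed (use tau_initial[of z] sub_det_initial[of z] in \<open>simp_all add: eval_nat_numeral\<close>)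

text \<open>minor_det z k m is the minor of M_{k+m+1} without row 0 and column k.\<close>

definition minor_entry :: "'a::field \<Rightarrow> nat \<Rightarrow> nat \<Rightarrow> nat \<Rightarrow> 'a" where
  "minor_entry z k r c = M_entry z (Suc r) (if c < k then c else Suc c)"

definition minor_det :: "'a::field \<Rightarrow> nat \<Rightarrow> nat \<Rightarrow> 'a" where
  "minor_det z k m = det (square_mat (k + m) (minor_entry z k))"

lemma Dni_eq_minor_det: "Dni (Suc (k + m)) (Suc k) z = (-1)^k * minor_det z k m"
proof -
  let ?f = "\<lambda>p q. if q = k then (if p = 0 then 1 else 0) else M_entry z p q"
  have "Dni (Suc (k + m)) (Suc k) z = det (square_mat (Suc (k + m)) ?f)"
    unfolding Dni_def square_mat_def
    by (rule arg_cong[where f = det], rule eq_matI) (auto simp: M_mat_def T_mat_def M_entry_def)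
  also have "\<dots> = (-1)^k * det (square_mat (k + m) (\<lambda>r c. ?f (Suc r) (if c < k then c else Suc c)))"
    by (rule det_square_mat_unit_col) auto
  also have "square_mat (k + m) (\<lambda>r c. ?f (Suc r) (if c < k then c else Suc c)) =
      square_mat (k + m) (minor_entry z k)"
    by (rule square_mat_cong) (simp add: minor_entry_def)
  finally show ?thesis by (simp add: minor_det_def)
qed

lemma minor_det_0_left: "minor_det z 0 m = D m z"
  unfolding minor_det_def D_eq_det_M
  by (simp, rule arg_cong[where f = det], rule square_mat_cong) (simp add: minor_entry_def M_entry_def)

lemma minor_det_0_right: "minor_det z k 0 = sub_det z k"
  unfolding minor_det_def sub_det_def
  by (simp, rule arg_cong[where f = det], rule square_mat_cong) (simp add: minor_entry_def)

lemma minor_det_1: "minor_det z (Suc j) (Suc 0) = sub_det z (Suc j) + z^4 * sub_det z j"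
proof -
  let ?f = "minor_entry z (Suc j)"
  have "det (square_mat (Suc (Suc j)) ?f) =
      ?f (Suc j) (Suc j) * det (square_mat (Suc j) ?f) - ?f (Suc j) j * ?f j (Suc j) * det (square_mat j ?f)"
    by (rule det_square_mat_two_term) (auto simp: minor_entry_def M_entry_def)
  moreover have "square_mat n ?f = square_mat n (\<lambda>r c. M_entry z (Suc r) c)" if "n \<le> Suc j" for n
    by (rule square_mat_cong) (use that in \<open>simp add: minor_entry_def\<close>)
  ultimately show ?thesis
    by (simp add: minor_det_def sub_det_def minor_entry_def M_entry_def eval_nat_numeral)
qed

lemma minor_det_2: "minor_det z k 2 = minor_det z k (Suc 0) - 2 * z^3 * sub_det z k"
proof -
  let ?f = "minor_entry z k"
  have "det (square_mat (Suc (Suc k)) ?f) =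
      ?f (Suc k) (Suc k) * det (square_mat (Suc k) ?f) - ?f (Suc k) k * ?f k (Suc k) * det (square_mat k ?f)"
    by (rule det_square_mat_two_term) (auto simp: minor_entry_def M_entry_def)
  moreover have "square_mat k ?f = square_mat k (\<lambda>r c. M_entry z (Suc r) c)"
    by (rule square_mat_cong) (simp add: minor_entry_def)
  ultimately show ?thesis
    by (simp add: minor_det_def sub_det_def minor_entry_def M_entry_def eval_nat_numeral)
qed

lemma minor_det_recurrence:
  "minor_det z k (Suc (Suc (Suc m))) =
    minor_det z k (Suc (Suc m)) - 2 * z^3 * minor_det z k (Suc m) + z^6 * minor_det z k m"
  unfolding minor_det_def add_Suc_right
  by (subst det_square_mat_three_term) (auto simp: minor_entry_def M_entry_def eval_nat_numeral)

lemma minor_det_Suc_left: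
  "minor_det z (Suc j) m = sub_det z (Suc j) * D m z + z^4 * sub_det z j * D_prev z m"
proof (rule linear_recurrence3_unique[where u = "minor_det z (Suc j)"
    and v = "\<lambda>m. sub_det z (Suc j) * D m z + z^4 * sub_det z j * D_prev z m"])
  show "minor_det z (Suc j) (Suc (Suc (Suc m))) = 1 * minor_det z (Suc j) (Suc (Suc m))
      + (- 2 * z^3) * minor_det z (Suc j) (Suc m) + z^6 * minor_det z (Suc j) m" for m
    by (simp add: minor_det_recurrence)
  show "sub_det z (Suc j) * D (Suc (Suc (Suc m))) z + z^4 * sub_det z j * D_prev z (Suc (Suc (Suc m))) =
      1 * (sub_det z (Suc j) * D (Suc (Suc m)) z + z^4 * sub_det z j * D_prev z (Suc (Suc m)))
      + (- 2 * z^3) * (sub_det z (Suc j) * D (Suc m) z + z^4 * sub_det z j * D_prev z (Suc m))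
      + z^6 * (sub_det z (Suc j) * D m z + z^4 * sub_det z j * D_prev z m)" for m
    by (simp add: D_recurrence D_prev_recurrence algebra_simps)
  show "minor_det z (Suc j) 0 = sub_det z (Suc j) * D 0 z + z^4 * sub_det z j * D_prev z 0"
    "minor_det z (Suc j) 1 = sub_det z (Suc j) * D 1 z + z^4 * sub_det z j * D_prev z 1"
    "minor_det z (Suc j) 2 = sub_det z (Suc j) * D 2 z + z^4 * sub_det z j * D_prev z 2"
    by (simp_all add: minor_det_0_right minor_det_1 minor_det_2 D_initial
        D_prev_def algebra_simps)
qed

lemma signed_sub_det_eq_tau: "(-1)^k * sub_det z k = z^k * tau z (Suc k)"
  by (simp add: sub_det_eq_tau power_minus')

theorem mainTheorem5:
  fixes z :: "'a::field" and n i :: nat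
  assumes "i + 1 \<ge> 2" and "n \<ge> i + 1"
  shows "Dni n i z = z ^ (i - 1) * tau z i * D (n - i) z
                     - z ^ (i + 2) * tau z (i - 1) * D (n - i - 1) z"
proof -
  define k m where "k = i - 1" and "m = n - i"
  have i: "i = Suc k" and n: "n = Suc (k + m)" and "m \<ge> 1"
    using assms by (simp_all add: k_def m_def)
  have Dni: "Dni n i z = (-1)^k * minor_det z k m"
    unfolding i n by (rule Dni_eq_minor_det)
  show ?thesis
  proof (cases k)
    case 0
    then show ?thesis unfolding Dni by (simp add: i n minor_det_0_left tau_initial)
  next
    case (Suc j)
    have "D_prev z m = D (m - 1) z" using \<open>m \<ge> 1\<close> by (simp add: D_prev_def)
    then have "Dni n i z = (-1)^k * sub_det z k * D m z - z^4 * ((-1)^j * sub_det z j) * D (m - 1) z"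
      unfolding Dni Suc minor_det_Suc_left by (simp add: algebra_simps)
    moreover have "z^4 * ((-1)^j * sub_det z j) = z^(i + 2) * tau z (i - 1)"
      unfolding signed_sub_det_eq_tau i Suc by (simp add: mult.assoc eval_nat_numeral)
    ultimately show ?thesis by (simp add: signed_sub_det_eq_tau i n)
  qed
qed

end
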